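(* Let $\mu$ be a positive finite Borel measure on $[0,1)$ and let $v,w$ be weights on $\mathbb{D}$ such that $1/v\in L_1([0,1),\mu)$ and $I_\mu:H^0_v\to H^0_w$ is (well defined and) continuous. Then $I_\mu:H^0_v\to H^0_w$ and $I_\mu:H^\infty_v\to H^\infty_w$ are compact if and only if $I_\mu(H^\infty_v)\subseteq H^0_w$.
   Context: $\mathbb{D}$ is the open unit disc and $H(\mathbb{D})$ the holomorphic functions on $\mathbb{D}$. A weight is a function $v:\mathbb{D}\to(0,\infty)$ that is radial, continuous, non-increasing in $|z|$, with $\lim_{r\to1^-}v(r)=0$. $H^\infty_v=\{f\in H(\mathbb{D}):\|f\|_v:=\sup_{z}v(z)|f(z)|<\infty\}$ and $H^0_v=\{f\in H^\infty_v:\lim_{|z|\to1^-}v(z)|f(z)|=0\}$, with norm $\|\cdot\|_v$. $I_\mu(f)(z)=\int_0^1\frac{f(t)}{1-tz}\,d\mu(t)$ whenever this defines a holomorphic function on $\mathbb{D}$. *)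

theory Defs
  imports "HOL-Analysis.Analysis"
begin

definition weight :: "(complex \<Rightarrow> real) \<Rightarrow> bool" where
  "weight v \<longleftrightarrow>
     (\<forall>z\<in>ball 0 1. v z > 0) \<and>
     (\<forall>z\<in>ball 0 1. v z = v (complex_of_real (cmod z))) \<and>
     continuous_on (ball 0 1) v \<and>
     (\<forall>z\<in>ball 0 1. \<forall>u\<in>ball 0 1. cmod z \<le> cmod u \<longrightarrow> v u \<le> v z) \<and>
     ((\<lambda>r. v (complex_of_real r)) \<longlongrightarrow> 0) (at_left 1)"

definition Hinf :: "(complex \<Rightarrow> real) \<Rightarrow> (complex \<Rightarrow> complex) set" where
  "Hinf v = {f. f holomorphic_on ball 0 1 \<and> (\<exists>C. \<forall>z\<in>ball 0 1. v z * cmod (f z) \<le> C)}"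

definition H0 :: "(complex \<Rightarrow> real) \<Rightarrow> (complex \<Rightarrow> complex) set" where
  "H0 v = {f \<in> Hinf v. \<forall>\<epsilon>>0. \<exists>r<1. \<forall>z\<in>ball 0 1. r < cmod z \<longrightarrow> v z * cmod (f z) \<le> \<epsilon>}"

definition Iop :: "real measure \<Rightarrow> (complex \<Rightarrow> complex) \<Rightarrow> complex \<Rightarrow> complex" where
  "Iop M f = (\<lambda>z. LINT t|M. f (complex_of_real t) / (1 - complex_of_real t * z))"

text \<open>Boundedness (= continuity, by linearity) w.r.t. the weighted sup norms:
  norm_w (T f) \<le> C * norm_v f.\<close>
definition bounded_op ::
  "((complex \<Rightarrow> complex) \<Rightarrow> complex \<Rightarrow> complex) \<Rightarrow> (complex \<Rightarrow> complex) set \<Rightarrow>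
   (complex \<Rightarrow> real) \<Rightarrow> (complex \<Rightarrow> real) \<Rightarrow> bool" where
  "bounded_op T X v w \<longleftrightarrow> (\<exists>C. \<forall>f\<in>X. \<forall>B::real.
      (\<forall>z\<in>ball 0 1. v z * cmod (f z) \<le> B) \<longrightarrow> (\<forall>z\<in>ball 0 1. w z * cmod (T f z) \<le> C * B))"

definition compact_op ::
  "((complex \<Rightarrow> complex) \<Rightarrow> complex \<Rightarrow> complex) \<Rightarrow> (complex \<Rightarrow> complex) set \<Rightarrow>
   (complex \<Rightarrow> complex) set \<Rightarrow> (complex \<Rightarrow> real) \<Rightarrow> (complex \<Rightarrow> real) \<Rightarrow> bool" where
  "compact_op T X Y v w \<longleftrightarrow>
     (\<forall>f\<in>X. T f \<in> Y) \<and>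
     (\<forall>F (B::real). (\<forall>n. F n \<in> X) \<and> (\<forall>n. \<forall>z\<in>ball 0 1. v z * cmod (F n z) \<le> B) \<longrightarrow>
        (\<exists>(r::nat\<Rightarrow>nat) g. strict_mono r \<and> g \<in> Y \<and>
           (\<forall>\<epsilon>>0. \<exists>N::nat. \<forall>n\<ge>N. \<forall>z\<in>ball 0 1. w z * cmod (T (F (r n)) z - g z) \<le> \<epsilon>)))"

end

theory Submission
  imports Defs "HOL-Complex_Analysis.Complex_Analysis"
begin

text \<open>If \<open>I\<^sub>\<mu>\<close> is compact on \<open>H\<^sup>0\<^sub>v\<close> and \<open>f \<in> H\<^sup>\<infinity>\<^sub>v\<close>, the dilations \<open>f(\<sigma>\<^sub>n \<cdot>)\<close>,
  \<open>\<sigma>\<^sub>n \<rightarrow> 1\<close>, lie in \<open>H\<^sup>0\<^sub>v\<close> with norms at most \<open>\<parallel>f\<parallel>\<^sub>v\<close>, and \<open>I\<^sub>\<mu>\<close> of them converges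
  pointwise to \<open>I\<^sub>\<mu> f\<close> by dominated convergence (\<open>1/v \<in> L\<^sub>1(\<mu>)\<close> dominates every kernel);
  a norm convergent subsequence then identifies \<open>I\<^sub>\<mu> f\<close> with an element of \<open>H\<^sup>0\<^sub>w\<close>.

  Conversely, by Montel's theorem every bounded sequence in \<open>H\<^sup>\<infinity>\<^sub>v\<close> has a subsequence
  converging locally uniformly, so it suffices that \<open>I\<^sub>\<mu>\<close> maps bounded, locally uniformly
  null sequences to norm null sequences. Since \<open>\<integral>|e\<^sub>k| d\<mu> \<rightarrow> 0\<close>, \<open>I\<^sub>\<mu> e\<^sub>k \<rightarrow> 0\<close> uniformly on
  compact sets, so a failure is witnessed at points \<open>z\<^sub>k\<close> tending to the boundary. After
  replacing \<open>e\<^sub>k\<close> by dilations (which lie in \<open>H\<^sup>0\<^sub>v\<close>), a gliding hump argument extracts a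
  subsequence whose humps are separated in \<open>|z|\<close>; the series of these humps is a function in
  \<open>H\<^sup>\<infinity>\<^sub>v\<close> whose image under \<open>I\<^sub>\<mu>\<close> stays large at the points \<open>z\<^sub>k\<close>, hence is not in \<open>H\<^sup>0\<^sub>w\<close>.\<close>

abbreviation wnorm_le :: "(complex \<Rightarrow> real) \<Rightarrow> (complex \<Rightarrow> complex) \<Rightarrow> real \<Rightarrow> bool" where
  "wnorm_le v f B \<equiv> \<forall>z\<in>ball 0 1. v z * cmod (f z) \<le> B"

abbreviation wnorm_tendsto ::
  "(complex \<Rightarrow> real) \<Rightarrow> (nat \<Rightarrow> complex \<Rightarrow> complex) \<Rightarrow> (complex \<Rightarrow> complex) \<Rightarrow> bool" where
  "wnorm_tendsto w G g \<equiv> \<forall>\<epsilon>>0. \<exists>N::nat. \<forall>n\<ge>N. wnorm_le w (\<lambda>z. G n z - g z) \<epsilon>"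

lemma sum_le_except_one:
  fixes u c :: "'a \<Rightarrow> 'b::ordered_comm_monoid_add"
  assumes "finite A" and off: "\<And>j. j \<in> A \<Longrightarrow> j \<noteq> i \<Longrightarrow> u j \<le> c j"
    and "u i \<le> K" "0 \<le> K" "\<And>j. j \<in> A \<Longrightarrow> 0 \<le> c j"
  shows "(\<Sum>j\<in>A. u j) \<le> K + (\<Sum>j\<in>A. c j)"
proof (cases "i \<in> A")
  case True
  have "(\<Sum>j\<in>A. u j) = u i + (\<Sum>j\<in>A - {i}. u j)"
    using True assms(1) by (simp add: sum.remove)
  also have "\<dots> \<le> K + (\<Sum>j\<in>A - {i}. c j)"
    using assms by (intro add_mono sum_mono) auto
  also have "\<dots> \<le> K + (\<Sum>j\<in>A. c j)"
    using assms by (intro add_left_mono sum_mono2) auto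
  finally show ?thesis .
next
  case False
  then have "(\<Sum>j\<in>A. u j) \<le> (\<Sum>j\<in>A. c j)"
    using off by (intro sum_mono) auto
  then show ?thesis using \<open>0 \<le> K\<close> by (simp add: add_increasing)
qed

lemma norm_sum_ge_norm_minus_rest:
  fixes a :: "'a \<Rightarrow> 'b::real_normed_vector"
  assumes "finite A" "m \<in> A"
  shows "norm (a m) - (\<Sum>j\<in>A - {m}. norm (a j)) \<le> norm (\<Sum>j\<in>A. a j)"
proof -
  have "a m = (\<Sum>j\<in>A. a j) - (\<Sum>j\<in>A - {m}. a j)"
    using assms by (simp add: sum.remove)
  then have "norm (a m) \<le> norm (\<Sum>j\<in>A. a j) + norm (\<Sum>j\<in>A - {m}. a j)"
    by (metis norm_triangle_ineq4)
  moreover have "norm (\<Sum>j\<in>A - {m}. a j) \<le> (\<Sum>j\<in>A - {m}. norm (a j))"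
    by (rule norm_sum)
  ultimately show ?thesis by linarith
qed

lemma sum_half_powers_le: "(\<Sum>j<J. (1/2::real) ^ j) \<le> 2"
  by (simp add: sum_gp_strict)

lemma half_power_le_of_le: "i \<le> j \<Longrightarrow> (1/2::real) ^ j \<le> (1/2) ^ i"
  by (rule power_decreasing) auto

lemma le_off_threshold_index:
  fixes a :: "nat \<Rightarrow> 'a::linorder"
  assumes "mono a"
    and outside: "\<And>j. a j < x \<Longrightarrow> u j \<le> c j"
    and inside: "\<And>j. x \<le> a j \<Longrightarrow> u (Suc j) \<le> c (Suc j)"
    and below: "\<And>j. j < m \<Longrightarrow> a j < x" and "x \<le> a m" and "j \<noteq> m"
  shows "u j \<le> (c j :: 'b::order)"
proof (cases "j < m")
  case True
  then show ?thesis by (intro outside below)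
next
  case False
  then obtain i where "j = Suc i" "m \<le> i" using \<open>j \<noteq> m\<close> by (cases j) auto
  moreover have "x \<le> a i" using \<open>x \<le> a m\<close> \<open>mono a\<close> \<open>m \<le> i\<close> by (meson monoD order_trans)
  ultimately show ?thesis using inside by simp
qed

lemma ex_index_off_which_le:
  fixes a :: "nat \<Rightarrow> 'a::linorder"
  assumes "mono a"
    and outside: "\<And>j. a j < x \<Longrightarrow> u j \<le> c j"
    and inside: "\<And>j. x \<le> a j \<Longrightarrow> u (Suc j) \<le> c (Suc j)"
  shows "\<exists>i. \<forall>j. j \<noteq> i \<longrightarrow> u j \<le> (c j :: 'b::order)"
proof (cases "\<exists>i. x \<le> a i")
  case True
  then obtain i where "x \<le> a i" "\<And>j. j < i \<Longrightarrow> a j < x"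
    using exists_least_iff[of "\<lambda>i. x \<le> a i"] by (auto simp: not_le)
  then show ?thesis using le_off_threshold_index[where u = u and c = c, OF assms] by blast
next
  case False
  then show ?thesis using outside by (auto simp: not_le)
qed

lemma eventually_chain_subseq:
  assumes "\<And>k. eventually (P k) sequentially"
  obtains r :: "nat \<Rightarrow> nat" where "strict_mono r" "\<And>j. P (r j) (r (Suc j))"
proof -
  have "\<exists>k'. k < k' \<and> P k k'" for k
    using eventually_happens'[OF trivial_limit_sequentially
        eventually_conj[OF eventually_gt_at_top assms]] .
  then obtain next_index where next_index: "\<And>k. k < next_index k \<and> P k (next_index k)"
    by metis
  define r where "r j = (next_index ^^ j) 0" for j
  have r_Suc: "r (Suc j) = next_index (r j)" for j by (simp add: r_def)
  show ?thesis
  proof (rule that)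
    show "strict_mono r" using next_index by (simp add: strict_mono_Suc_iff r_Suc)
    show "P (r j) (r (Suc j))" for j using next_index by (simp add: r_Suc)
  qed
qed

section \<open>Weights and weighted norms\<close>

lemma weight_pos: "weight v \<Longrightarrow> z \<in> ball 0 1 \<Longrightarrow> 0 < v z"
  unfolding weight_def by blast

lemma weight_antimono:
  "weight v \<Longrightarrow> z \<in> ball 0 1 \<Longrightarrow> y \<in> ball 0 1 \<Longrightarrow> cmod z \<le> cmod y \<Longrightarrow> v y \<le> v z"
  unfolding weight_def by blast

lemma weight_le_weight_0: "weight v \<Longrightarrow> z \<in> ball 0 1 \<Longrightarrow> v z \<le> v 0"
  by (rule weight_antimono) auto

lemma weight_eventually_le:
  assumes "weight v" "0 < \<epsilon>"
  obtains r where "r < 1" "\<And>z. z \<in> ball 0 1 \<Longrightarrow> r < cmod z \<Longrightarrow> v z \<le> \<epsilon>"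
proof -
  have "((\<lambda>r. v (complex_of_real r)) \<longlongrightarrow> 0) (at_left 1)"
    using assms(1) unfolding weight_def by blast
  then have "eventually (\<lambda>r. v (complex_of_real r) < \<epsilon>) (at_left (1::real))"
    using assms(2) by (auto dest: order_tendstoD)
  then obtain r where r: "r < 1" "\<And>y. r < y \<Longrightarrow> y < 1 \<Longrightarrow> v (complex_of_real y) < \<epsilon>"
    by (auto simp: eventually_at_left_field)
  show ?thesis
  proof (rule that[OF r(1)])
    fix z :: complex assume z: "z \<in> ball 0 1" "r < cmod z"
    have "v z = v (complex_of_real (cmod z))" using assms(1) z(1) unfolding weight_def by blast
    then show "v z \<le> \<epsilon>" using r(2)[of "cmod z"] z by auto
  qed
qed

lemma wnorm_le_nonneg: "weight v \<Longrightarrow> wnorm_le v f B \<Longrightarrow> 0 \<le> B"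
  by (metis centre_in_ball mult_nonneg_nonneg norm_ge_zero order_trans weight_pos
      zero_less_one less_imp_le)

lemma wnorm_tendsto_imp_tendsto:
  assumes "weight w" "wnorm_tendsto w G g" "z \<in> ball 0 1"
  shows "(\<lambda>n. G n z) \<longlonglongrightarrow> g z"
proof (rule LIMSEQ_I)
  fix \<epsilon> :: real assume "0 < \<epsilon>"
  have wz: "0 < w z" using weight_pos assms by blast
  then obtain N where N: "\<And>n. N \<le> n \<Longrightarrow> w z * cmod (G n z - g z) \<le> \<epsilon> / 2 * w z"
    using assms(2,3) \<open>0 < \<epsilon>\<close> by (metis half_gt_zero mult_pos_pos)
  show "\<exists>N. \<forall>n\<ge>N. norm (G n z - g z) < \<epsilon>"
  proof (intro exI allI impI)
    fix n assume "N \<le> n"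
    then have "cmod (G n z - g z) \<le> \<epsilon> / 2" using N[of n] wz by (simp add: mult.commute)
    then show "norm (G n z - g z) < \<epsilon>" using \<open>0 < \<epsilon>\<close> by simp
  qed
qed

lemma H0_subset_Hinf: "H0 v \<subseteq> Hinf v"
  by (auto simp: H0_def)

lemma H0_cong_ball: "g \<in> H0 v \<Longrightarrow> (\<And>z. z \<in> ball 0 1 \<Longrightarrow> f z = g z) \<Longrightarrow> f \<in> H0 v"
  using holomorphic_cong[of "ball 0 1" "ball 0 1" f g] by (auto simp: H0_def Hinf_def)

lemma H0_choose_radii:
  assumes "\<And>k. f k \<in> H0 v" "\<And>k. 0 < \<delta> k"
  obtains \<rho> where "\<And>k. \<rho> k < 1"
    "\<And>k z. z \<in> ball 0 1 \<Longrightarrow> \<rho> k < cmod z \<Longrightarrow> v z * cmod (f k z) \<le> \<delta> k"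
proof -
  have "\<exists>\<rho><1. \<forall>z\<in>ball 0 1. \<rho> < cmod z \<longrightarrow> v z * cmod (f k z) \<le> \<delta> k" for k
    using assms unfolding H0_def by blast
  then show ?thesis using that by metis
qed

lemma bounded_in_H0:
  assumes v: "weight v" and hol: "f holomorphic_on ball 0 1"
    and bound: "\<And>z. z \<in> ball 0 1 \<Longrightarrow> cmod (f z) \<le> C"
  shows "f \<in> H0 v"
proof -
  have C: "0 \<le> C" using order_trans[OF norm_ge_zero bound[of 0]] by simp
  have "wnorm_le v f (v 0 * C)"
  proof
    fix z :: complex assume "z \<in> ball 0 1"
    then show "v z * cmod (f z) \<le> v 0 * C"
      using bound weight_le_weight_0[OF v] weight_pos[OF v] by (intro mult_mono) fastforce+
  qed
  then have "f \<in> Hinf v" using hol by (auto simp: Hinf_def)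
  moreover have "\<exists>r<1. \<forall>z\<in>ball 0 1. r < cmod z \<longrightarrow> v z * cmod (f z) \<le> \<epsilon>" if "0 < \<epsilon>" for \<epsilon>
  proof -
    have "0 < \<epsilon> / (C + 1)" using \<open>0 < \<epsilon>\<close> C by simp
    then obtain r where r: "r < 1" "\<And>z. z \<in> ball 0 1 \<Longrightarrow> r < cmod z \<Longrightarrow> v z \<le> \<epsilon> / (C + 1)"
      using weight_eventually_le[OF v] by blast
    have "v z * cmod (f z) \<le> \<epsilon>" if "z \<in> ball 0 1" "r < cmod z" for z
    proof -
      have "v z * cmod (f z) \<le> \<epsilon> / (C + 1) * (C + 1)"
        using r(2)[OF that] bound[OF that(1)] weight_pos[OF v that(1)] \<open>0 < \<epsilon>\<close> C
        by (intro mult_mono) auto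
      then show ?thesis using C by simp
    qed
    then show ?thesis using r(1) by blast
  qed
  ultimately show ?thesis by (simp add: H0_def)
qed

lemma eventually_weighted_le_of_uniform_limit_0:
  assumes v: "weight v" and lim: "uniform_limit (cball 0 R) e (\<lambda>_. 0) sequentially"
    and "R < 1" "0 < \<delta>"
  shows "\<forall>\<^sub>F k in sequentially. \<forall>y\<in>cball 0 R. v y * cmod (e k y) \<le> \<delta>"
proof -
  have v0: "0 < v 0" using weight_pos[OF v] by simp
  then have "\<forall>\<^sub>F k in sequentially. \<forall>y\<in>cball 0 R. dist (e k y) 0 < \<delta> / v 0"
    using uniform_limitD[OF lim, of "\<delta> / v 0"] \<open>0 < \<delta>\<close> by simp
  then show ?thesis
  proof (rule eventually_mono, intro ballI)
    fix k and y :: complex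
    assume small: "\<forall>y\<in>cball 0 R. dist (e k y) 0 < \<delta> / v 0" and y: "y \<in> cball 0 R"
    then have "y \<in> ball 0 1" using \<open>R < 1\<close> by simp
    then have "v y * cmod (e k y) \<le> v 0 * (\<delta> / v 0)"
      using small y weight_le_weight_0[OF v] weight_pos[OF v]
      by (intro mult_mono) (auto simp: dist_norm less_imp_le)
    then show "v y * cmod (e k y) \<le> \<delta>" using v0 by simp
  qed
qed

lemma wnorm_le_sum_of_humps:
  fixes g :: "nat \<Rightarrow> complex \<Rightarrow> complex"
  assumes v: "weight v" and bound: "\<And>j. wnorm_le v (g j) K"
    and humps: "\<And>z. z \<in> ball 0 1 \<Longrightarrow> \<exists>i. \<forall>j. j \<noteq> i \<longrightarrow> v z * cmod (g j z) \<le> 2 * (1/2) ^ j"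
  shows "wnorm_le v (\<lambda>z. \<Sum>j<J. g j z) (K + 4)"
proof
  fix z :: complex assume z: "z \<in> ball 0 1"
  obtain i where i: "\<And>j. j \<noteq> i \<Longrightarrow> v z * cmod (g j z) \<le> 2 * (1/2) ^ j"
    using humps[OF z] by blast
  have "v z * cmod (\<Sum>j<J. g j z) \<le> v z * (\<Sum>j<J. cmod (g j z))"
    using weight_pos[OF v z] by (intro mult_left_mono norm_sum) auto
  also have "\<dots> = (\<Sum>j<J. v z * cmod (g j z))" by (simp add: sum_distrib_left)
  also have "\<dots> \<le> K + (\<Sum>j<J. 2 * (1/2) ^ j)"
    using i bound z wnorm_le_nonneg[OF v bound] by (intro sum_le_except_one[where i = i]) auto
  also have "\<dots> \<le> K + 4"
    using sum_half_powers_le[of J] by (simp add: sum_distrib_left[symmetric])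
  finally show "v z * cmod (\<Sum>j<J. g j z) \<le> K + 4" .
qed

section \<open>Dilations and Montel's theorem\<close>

lemma norm_mult_le_of_norm_le_1: "cmod c \<le> 1 \<Longrightarrow> cmod (c * z) \<le> cmod z"
  by (simp add: norm_mult mult_left_le_one_le)

lemma holomorphic_on_dilation:
  assumes "g holomorphic_on ball 0 1" "cmod c \<le> 1"
  shows "(\<lambda>z. g (c * z)) holomorphic_on ball 0 1"
proof -
  have "c * z \<in> ball 0 1" if "z \<in> ball 0 1" for z
    using norm_mult_le_of_norm_le_1[OF assms(2), of z] that by auto
  then have "(\<lambda>z. c * z) ` ball 0 1 \<subseteq> ball 0 1" by blast
  then show ?thesis
    using holomorphic_on_compose_gen[of "\<lambda>z. c * z" "ball 0 1" g "ball 0 1"] assms(1)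
    by (auto simp: o_def intro: holomorphic_intros)
qed

lemma wnorm_le_dilation:
  assumes "weight v" "wnorm_le v g B" "cmod c \<le> 1"
  shows "wnorm_le v (\<lambda>z. g (c * z)) B"
proof
  fix z :: complex assume z: "z \<in> ball 0 1"
  have cz: "c * z \<in> ball 0 1" and "cmod (c * z) \<le> cmod z"
    using norm_mult_le_of_norm_le_1[OF assms(3), of z] z by auto
  then have "v z \<le> v (c * z)" using weight_antimono[OF assms(1) cz z] by blast
  then have "v z * cmod (g (c * z)) \<le> v (c * z) * cmod (g (c * z))" by (simp add: mult_right_mono)
  also have "\<dots> \<le> B" using assms(2) cz by blast
  finally show "v z * cmod (g (c * z)) \<le> B" .
qed

lemma dilation_in_H0:
  assumes v: "weight v" and g: "g holomorphic_on ball 0 1" and c: "cmod c < 1"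
  shows "(\<lambda>z. g (c * z)) \<in> H0 v"
proof -
  have "cball 0 (cmod c) \<subseteq> ball 0 1" using c by auto
  then have "compact (g ` cball 0 (cmod c))"
    using g by (intro compact_continuous_image holomorphic_on_imp_continuous_on)
      (auto intro: holomorphic_on_subset)
  then obtain C where C: "\<And>y. y \<in> cball 0 (cmod c) \<Longrightarrow> cmod (g y) \<le> C"
    using compact_imp_bounded bounded_pos by (metis image_eqI)
  have "cmod (g (c * z)) \<le> C" if "z \<in> ball 0 1" for z
    using that by (intro C) (auto simp: norm_mult mult_left_le)
  moreover have "(\<lambda>z. g (c * z)) holomorphic_on ball 0 1"
    using holomorphic_on_dilation[OF g] c by simp
  ultimately show ?thesis using bounded_in_H0[OF v] by blast
qed

lemma dilation_tendsto:
  fixes \<sigma> :: "nat \<Rightarrow> complex"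
  assumes "continuous_on (ball 0 1) g" "z \<in> ball 0 1" "\<sigma> \<longlonglongrightarrow> 1"
  shows "(\<lambda>n. g (\<sigma> n * z)) \<longlonglongrightarrow> g z"
proof -
  have "isCont g z" using assms(1,2) by (simp add: continuous_on_eq_continuous_at)
  moreover have "(\<lambda>n. \<sigma> n * z) \<longlonglongrightarrow> z" using tendsto_mult_right[OF assms(3), of z] by simp
  ultimately show ?thesis by (rule isCont_tendsto_compose)
qed

lemma exists_dilation_factors:
  obtains \<sigma> :: "nat \<Rightarrow> complex" where "\<And>n. cmod (\<sigma> n) < 1" "\<sigma> \<longlonglongrightarrow> 1"
proof
  show "cmod (of_nat n / of_nat (Suc n)) < 1" for n
    by (simp only: norm_divide norm_of_nat) simp
  show "(\<lambda>n. of_nat n / of_nat (Suc n) :: complex) \<longlonglongrightarrow> 1"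
    by (rule LIMSEQ_n_over_Suc_n)
qed

lemma uniform_limit_0_dilations:
  fixes d :: "nat \<Rightarrow> complex \<Rightarrow> complex" and c :: "nat \<Rightarrow> complex"
  assumes null: "uniform_limit (cball 0 \<rho>) d (\<lambda>_. 0) sequentially"
    and n: "\<And>N. N \<le> n N" and c: "\<And>N. cmod (c N) \<le> 1"
  shows "uniform_limit (cball 0 \<rho>) (\<lambda>N y. d (n N) (c N * y)) (\<lambda>_. 0) sequentially"
proof (rule uniform_limitI)
  fix \<delta> :: real assume "0 < \<delta>"
  then have "\<exists>N. \<forall>k\<ge>N. \<forall>y\<in>cball 0 \<rho>. dist (d k y) 0 < \<delta>"
    using null unfolding uniform_limit_sequentially_iff by blast
  then obtain N0 where N0: "\<And>k y. N0 \<le> k \<Longrightarrow> y \<in> cball 0 \<rho> \<Longrightarrow> dist (d k y) 0 < \<delta>"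
    by blast
  have "dist (d (n N) (c N * y)) 0 < \<delta>" if "N0 \<le> N" "y \<in> cball 0 \<rho>" for N y
  proof (rule N0)
    show "N0 \<le> n N" using n[of N] that(1) by simp
    show "c N * y \<in> cball 0 \<rho>"
      using norm_mult_le_of_norm_le_1[OF c, of N y] that(2) by (auto intro: order_trans)
  qed
  then show "\<forall>\<^sub>F N in sequentially. \<forall>y\<in>cball 0 \<rho>. dist (d (n N) (c N * y)) 0 < \<delta>"
    unfolding eventually_sequentially by blast
qed

lemma weighted_Montel:
  fixes F :: "nat \<Rightarrow> complex \<Rightarrow> complex"
  assumes v: "weight v" and hol: "\<And>n. F n holomorphic_on ball 0 1"
    and bound: "\<And>n. wnorm_le v (F n) B"
  obtains f r where "f holomorphic_on ball 0 1" "wnorm_le v f B" "strict_mono r"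
    "\<And>z. z \<in> ball 0 1 \<Longrightarrow> (\<lambda>n. F (r n) z) \<longlonglongrightarrow> f z"
    "\<And>\<rho>. \<rho> < 1 \<Longrightarrow> uniform_limit (cball 0 \<rho>) (F \<circ> r) f sequentially"
proof -
  have "\<exists>C. \<forall>h\<in>range F. \<forall>z\<in>K. norm (h z) \<le> C" if K: "compact K" "K \<subseteq> ball 0 1" for K
  proof (cases "K = {}")
    case False
    have "continuous_on K v"
      using v K(2) continuous_on_subset unfolding weight_def by blast
    then obtain z0 where z0: "z0 \<in> K" "\<And>z. z \<in> K \<Longrightarrow> v z0 \<le> v z"
      using continuous_attains_inf[OF K(1) False] by blast
    have pos: "0 < v z0" using weight_pos[OF v] z0(1) K(2) by blast
    have "norm (F n z) \<le> B / v z0" if z: "z \<in> K" for n z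
    proof -
      have "v z0 * norm (F n z) \<le> v z * norm (F n z)" using z0(2)[OF z] by (simp add: mult_right_mono)
      also have "\<dots> \<le> B" using bound z K(2) by blast
      finally show ?thesis using pos by (simp add: field_simps)
    qed
    then show ?thesis by blast
  qed simp
  then obtain f r where f: "f holomorphic_on ball 0 1" "strict_mono r"
    "\<And>z. z \<in> ball 0 1 \<Longrightarrow> (\<lambda>n. F (r n) z) \<longlonglongrightarrow> f z"
    "\<And>K. compact K \<Longrightarrow> K \<subseteq> ball 0 1 \<Longrightarrow> uniform_limit K (F \<circ> r) f sequentially"
    using Montel[of "ball 0 1" "range F" F] hol by blast
  show ?thesis
  proof (rule that[OF f(1) _ f(2,3)])
    show "wnorm_le v f B"
    proof
      fix z :: complex assume z: "z \<in> ball 0 1"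
      have "(\<lambda>n. v z * cmod (F (r n) z)) \<longlonglongrightarrow> v z * cmod (f z)"
        by (intro tendsto_intros f(3) z)
      then show "v z * cmod (f z) \<le> B"
        by (rule LIMSEQ_le_const2) (use bound z in auto)
    qed
    show "uniform_limit (cball 0 \<rho>) (F \<circ> r) f sequentially" if "\<rho> < 1" for \<rho>
      using that by (intro f(4)) auto
  qed
qed

section \<open>The integral operator\<close>

lemma norm_one_minus_mult_ge: "cmod c \<le> 1 \<Longrightarrow> 1 - cmod z \<le> cmod (1 - c * z)"
  using norm_mult_le_of_norm_le_1[of c z] norm_triangle_ineq2[of 1 "c * z"] by simp

lemma continuous_on_unit_interval:
  "continuous_on (ball 0 1) f \<Longrightarrow> continuous_on {0..<1::real} (\<lambda>t. f (complex_of_real t))"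
  by (rule continuous_on_compose2) (auto intro: continuous_intros)

locale Iop_weighted =
  fixes M :: "real measure" and v :: "complex \<Rightarrow> real"
  assumes sets_M: "sets M = sets (restrict_space borel {0..<1::real})"
    and weight_v: "weight v"
    and integrable_inverse_v: "integrable M (\<lambda>t. 1 / v (complex_of_real t))"
begin

lemma space_M: "space M = {0..<1}"
  using sets_eq_imp_space_eq[OF sets_M] by (simp add: space_restrict_space)

lemma AE_unit_interval: "(\<And>t. t \<in> {0..<1} \<Longrightarrow> P t) \<Longrightarrow> AE t in M. P t"
  by (rule AE_I2) (simp add: space_M)

lemma borel_measurable_continuous_on_unit_interval:
  "continuous_on {0..<1} g \<Longrightarrow> g \<in> borel_measurable M"
  using borel_measurable_continuous_on_restrict measurable_cong_sets[OF sets_M refl] by blast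

lemma Iop_kernel_measurable:
  assumes "continuous_on (ball 0 1) f" "z \<in> ball 0 1"
  shows "(\<lambda>t. f (complex_of_real t) / (1 - complex_of_real t * z)) \<in> borel_measurable M"
proof (rule borel_measurable_continuous_on_unit_interval)
  have "1 - complex_of_real t * z \<noteq> 0" if "t \<in> {0..<1}" for t
    using norm_one_minus_mult_ge[of "complex_of_real t" z] that assms(2) by auto
  then show "continuous_on {0..<1} (\<lambda>t. f (complex_of_real t) / (1 - complex_of_real t * z))"
    by (intro continuous_intros continuous_on_unit_interval assms(1)) auto
qed

lemma norm_le_inverse_weight:
  assumes "wnorm_le v f C" "t \<in> {0..<1}"
  shows "cmod (f (complex_of_real t)) \<le> C * (1 / v (complex_of_real t))"
proof -
  have "0 < v (complex_of_real t)" using weight_pos[OF weight_v] assms(2) by auto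
  moreover have "v (complex_of_real t) * cmod (f (complex_of_real t)) \<le> C" using assms by auto
  ultimately show ?thesis by (simp add: field_simps)
qed

lemma Iop_kernel_bound:
  assumes "wnorm_le v f C" "t \<in> {0..<1}" "z \<in> ball 0 1"
  shows "cmod (f (complex_of_real t) / (1 - complex_of_real t * z))
    \<le> C / (1 - cmod z) * (1 / v (complex_of_real t))"
proof -
  have d: "1 - cmod z \<le> cmod (1 - complex_of_real t * z)" "0 < 1 - cmod z"
    using norm_one_minus_mult_ge[of "complex_of_real t" z] assms(2,3) by auto
  have "cmod (f (complex_of_real t) / (1 - complex_of_real t * z))
      \<le> cmod (f (complex_of_real t)) / (1 - cmod z)"
    unfolding norm_divide using d by (intro divide_left_mono mult_pos_pos) auto
  also have "\<dots> \<le> C * (1 / v (complex_of_real t)) / (1 - cmod z)"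
    using norm_le_inverse_weight[OF assms(1,2)] d by (intro divide_right_mono) auto
  finally show ?thesis by (simp add: ac_simps)
qed

lemma Iop_kernel_integrable:
  assumes "continuous_on (ball 0 1) f" "wnorm_le v f C" "z \<in> ball 0 1"
  shows "integrable M (\<lambda>t. f (complex_of_real t) / (1 - complex_of_real t * z))"
proof (rule Bochner_Integration.integrable_bound)
  show "integrable M (\<lambda>t. C / (1 - cmod z) * (1 / v (complex_of_real t)))"
    using integrable_inverse_v by (rule integrable_mult_right)
  show "AE t in M. norm (f (complex_of_real t) / (1 - complex_of_real t * z))
      \<le> norm (C / (1 - cmod z) * (1 / v (complex_of_real t)))"
  proof (rule AE_unit_interval)
    fix t :: real assume "t \<in> {0..<1}"
    with Iop_kernel_bound[OF assms(2) _ assms(3)] show "norm (f (complex_of_real t) / (1 - complex_of_real t * z))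
      \<le> norm (C / (1 - cmod z) * (1 / v (complex_of_real t)))"
      using abs_ge_self[of "C / (1 - cmod z) * (1 / v (complex_of_real t))"]
      unfolding real_norm_def by fastforce
  qed
qed (rule Iop_kernel_measurable[OF assms(1,3)])

lemma integrable_norm_unit_interval:
  assumes "continuous_on (ball 0 1) f" "wnorm_le v f C"
  shows "integrable M (\<lambda>t. cmod (f (complex_of_real t)))"
proof (rule Bochner_Integration.integrable_bound)
  show "integrable M (\<lambda>t. C * (1 / v (complex_of_real t)))"
    using integrable_inverse_v by (rule integrable_mult_right)
  show "(\<lambda>t. cmod (f (complex_of_real t))) \<in> borel_measurable M"
    by (intro borel_measurable_continuous_on_unit_interval continuous_intros
        continuous_on_unit_interval assms(1))
  show "AE t in M. norm (cmod (f (complex_of_real t))) \<le> norm (C * (1 / v (complex_of_real t)))"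
  proof (rule AE_unit_interval)
    fix t :: real assume "t \<in> {0..<1}"
    with norm_le_inverse_weight[OF assms(2)]
    show "norm (cmod (f (complex_of_real t))) \<le> norm (C * (1 / v (complex_of_real t)))"
      using abs_ge_self[of "C * (1 / v (complex_of_real t))"] unfolding real_norm_def by fastforce
  qed
qed

lemma norm_Iop_le:
  assumes "continuous_on (ball 0 1) f" "wnorm_le v f C" "z \<in> ball 0 1"
  shows "cmod (Iop M f z) \<le> (LINT t|M. cmod (f (complex_of_real t))) / (1 - cmod z)"
proof -
  have "cmod (Iop M f z) \<le> (LINT t|M. cmod (f (complex_of_real t) / (1 - complex_of_real t * z)))"
    unfolding Iop_def by (rule integral_norm_bound)
  also have "\<dots> \<le> (LINT t|M. cmod (f (complex_of_real t)) / (1 - cmod z))"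
  proof (rule integral_mono)
    show "integrable M (\<lambda>t. cmod (f (complex_of_real t) / (1 - complex_of_real t * z)))"
      using Iop_kernel_integrable[OF assms] by (rule integrable_norm)
    show "integrable M (\<lambda>t. cmod (f (complex_of_real t)) / (1 - cmod z))"
      using integrable_norm_unit_interval[OF assms(1,2)] by (rule integrable_divide)
    fix t assume "t \<in> space M"
    then have "1 - cmod z \<le> cmod (1 - complex_of_real t * z)"
      by (intro norm_one_minus_mult_ge) (simp add: space_M)
    then show "cmod (f (complex_of_real t) / (1 - complex_of_real t * z))
        \<le> cmod (f (complex_of_real t)) / (1 - cmod z)"
      unfolding norm_divide using assms(3) by (intro divide_left_mono mult_pos_pos) auto
  qed
  finally show ?thesis by simp
qed

lemma Iop_tendsto:
  assumes cont: "\<And>n. continuous_on (ball 0 1) (F n)" and bound: "\<And>n. wnorm_le v (F n) C"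
    and "continuous_on (ball 0 1) f"
    and lim: "\<And>t. t \<in> {0..<1} \<Longrightarrow> (\<lambda>n. F n (complex_of_real t)) \<longlonglongrightarrow> f (complex_of_real t)"
    and z: "z \<in> ball 0 1"
  shows "(\<lambda>n. Iop M (F n) z) \<longlonglongrightarrow> Iop M f z"
  unfolding Iop_def
proof (rule integral_dominated_convergence)
  show "integrable M (\<lambda>t. C / (1 - cmod z) * (1 / v (complex_of_real t)))"
    using integrable_inverse_v by (rule integrable_mult_right)
  show "AE t in M. (\<lambda>n. F n (complex_of_real t) / (1 - complex_of_real t * z))
      \<longlonglongrightarrow> f (complex_of_real t) / (1 - complex_of_real t * z)"
    using lim by (auto simp: divide_inverse intro!: AE_unit_interval tendsto_mult_right)
  show "AE t in M. norm (F n (complex_of_real t) / (1 - complex_of_real t * z))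
      \<le> C / (1 - cmod z) * (1 / v (complex_of_real t))" for n
    using Iop_kernel_bound[OF bound _ z] by (intro AE_unit_interval)
qed (use Iop_kernel_measurable assms in auto)

lemma integral_norm_tendsto_0:
  assumes cont: "\<And>n. continuous_on (ball 0 1) (F n)" and bound: "\<And>n. wnorm_le v (F n) C"
    and lim: "\<And>t. t \<in> {0..<1} \<Longrightarrow> (\<lambda>n. F n (complex_of_real t)) \<longlonglongrightarrow> 0"
  shows "(\<lambda>n. LINT t|M. cmod (F n (complex_of_real t))) \<longlonglongrightarrow> 0"
proof -
  have "(\<lambda>n. LINT t|M. cmod (F n (complex_of_real t))) \<longlonglongrightarrow> (LINT t|M. 0)"
  proof (rule integral_dominated_convergence)
    show "integrable M (\<lambda>t. C * (1 / v (complex_of_real t)))"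
      using integrable_inverse_v by (rule integrable_mult_right)
    show "(\<lambda>t. cmod (F n (complex_of_real t))) \<in> borel_measurable M" for n
      by (intro borel_measurable_continuous_on_unit_interval continuous_intros
          continuous_on_unit_interval cont)
    show "AE t in M. (\<lambda>n. cmod (F n (complex_of_real t))) \<longlonglongrightarrow> 0"
      using lim by (intro AE_unit_interval tendsto_norm_zero)
    show "AE t in M. norm (cmod (F n (complex_of_real t))) \<le> C * (1 / v (complex_of_real t))" for n
      using norm_le_inverse_weight[OF bound] by (intro AE_unit_interval) simp
  qed simp
  then show ?thesis by simp
qed

lemma Iop_diff:
  assumes "continuous_on (ball 0 1) f" "wnorm_le v f C"
    and "continuous_on (ball 0 1) g" "wnorm_le v g D" and "z \<in> ball 0 1"
  shows "Iop M (\<lambda>y. f y - g y) z = Iop M f z - Iop M g z"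
  unfolding Iop_def diff_divide_distrib
  by (rule Bochner_Integration.integral_diff
      [OF Iop_kernel_integrable[OF assms(1,2,5)] Iop_kernel_integrable[OF assms(3,4,5)]])

lemma Iop_sum:
  assumes "\<And>j. j \<in> A \<Longrightarrow> continuous_on (ball 0 1) (g j)" "\<And>j. j \<in> A \<Longrightarrow> wnorm_le v (g j) C"
    and "z \<in> ball 0 1"
  shows "Iop M (\<lambda>y. \<Sum>j\<in>A. g j y) z = (\<Sum>j\<in>A. Iop M (g j) z)"
  unfolding Iop_def sum_divide_distrib
  by (rule Bochner_Integration.integral_sum) (rule Iop_kernel_integrable[OF assms(1,2,3)], auto)

lemma Iop_dilation_tendsto:
  fixes \<sigma> :: "nat \<Rightarrow> complex"
  assumes f: "continuous_on (ball 0 1) f" "wnorm_le v f C"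
    and \<sigma>: "\<And>n. cmod (\<sigma> n) \<le> 1" "\<sigma> \<longlonglongrightarrow> 1" and z: "z \<in> ball 0 1"
  shows "(\<lambda>n. Iop M (\<lambda>y. f (\<sigma> n * y)) z) \<longlonglongrightarrow> Iop M f z"
proof (rule Iop_tendsto[OF _ _ f(1) _ z])
  show "continuous_on (ball 0 1) (\<lambda>y. f (\<sigma> n * y))" for n
  proof (rule continuous_on_compose2[OF f(1)])
    show "(\<lambda>y. \<sigma> n * y) ` ball 0 1 \<subseteq> ball 0 1"
      using norm_mult_le_of_norm_le_1[OF \<sigma>(1), of n] by (fastforce intro: le_less_trans)
  qed (auto intro: continuous_intros)
  show "wnorm_le v (\<lambda>y. f (\<sigma> n * y)) C" for n
    by (rule wnorm_le_dilation[OF weight_v f(2) \<sigma>(1)])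
  show "(\<lambda>n. f (\<sigma> n * complex_of_real t)) \<longlonglongrightarrow> f (complex_of_real t)" if "t \<in> {0..<1}" for t
    using that by (intro dilation_tendsto f(1) \<sigma>(2)) auto
qed

end

locale Iop_weighted_pair = Iop_weighted +
  fixes w :: "complex \<Rightarrow> real"
  assumes weight_w: "weight w"
begin

lemma Iop_uniformly_small_on_cball:
  assumes cont: "\<And>k. continuous_on (ball 0 1) (e k)" and bound: "\<And>k. wnorm_le v (e k) K"
    and null: "\<And>t. t \<in> {0..<1} \<Longrightarrow> (\<lambda>k. e k (complex_of_real t)) \<longlonglongrightarrow> 0"
    and "R < 1" "0 < \<delta>"
  shows "\<forall>\<^sub>F k in sequentially. \<forall>z\<in>cball 0 R. w z * cmod (Iop M (e k) z) \<le> \<delta>"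
proof -
  define A where "A k = (LINT t|M. cmod (e k (complex_of_real t)))" for k
  have "(\<lambda>k. w 0 * A k) \<longlonglongrightarrow> 0"
    unfolding A_def using integral_norm_tendsto_0[OF cont bound null] by (rule tendsto_mult_right_zero)
  then have "\<forall>\<^sub>F k in sequentially. w 0 * A k < \<delta> * (1 - R)"
    using \<open>R < 1\<close> \<open>0 < \<delta>\<close> by (intro order_tendstoD(2)) auto
  then show ?thesis
  proof (rule eventually_mono)
    fix k assume small: "w 0 * A k < \<delta> * (1 - R)"
    show "\<forall>z\<in>cball 0 R. w z * cmod (Iop M (e k) z) \<le> \<delta>"
    proof
      fix z :: complex assume "z \<in> cball 0 R"
      then have z: "z \<in> ball 0 1" "cmod z \<le> R" using \<open>R < 1\<close> by auto
      have "0 \<le> A k" unfolding A_def by simp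
      then have "w z * cmod (Iop M (e k) z) \<le> w 0 * (A k / (1 - cmod z))"
        unfolding A_def using norm_Iop_le[OF cont bound z(1)] weight_le_weight_0[OF weight_w z(1)]
          weight_pos[OF weight_w z(1)] z(1) by (intro mult_mono) auto
      also have "\<dots> \<le> \<delta> * (1 - R) / (1 - cmod z)"
        using small z(1) by (simp add: divide_right_mono)
      also have "\<dots> \<le> \<delta>"
        using z \<open>0 < \<delta>\<close> by (simp add: field_simps mult_left_mono)
      finally show "w z * cmod (Iop M (e k) z) \<le> \<delta>" .
    qed
  qed
qed

section \<open>The gliding hump\<close>

lemma Iop_sum_keeps_peak:
  fixes g :: "nat \<Rightarrow> complex \<Rightarrow> complex"
  assumes cont: "\<And>j. continuous_on (ball 0 1) (g j)" and bound: "\<And>j. wnorm_le v (g j) K"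
    and x: "x \<in> ball 0 1" and "0 < \<epsilon>" and "m < J"
    and peak: "\<epsilon> < w x * cmod (Iop M (g m) x)"
    and off_peak: "\<And>j. j \<noteq> m \<Longrightarrow> w x * cmod (Iop M (g j) x) \<le> \<epsilon> / 4 * (1/2) ^ j"
  shows "\<epsilon> / 2 < w x * cmod (Iop M (\<lambda>z. \<Sum>j<J. g j z) x)"
proof -
  let ?a = "\<lambda>j. cmod (Iop M (g j) x)"
  have "?a m - (\<Sum>j\<in>{..<J} - {m}. ?a j) \<le> cmod (Iop M (\<lambda>z. \<Sum>j<J. g j z) x)"
    unfolding Iop_sum[OF cont bound x] using \<open>m < J\<close> by (intro norm_sum_ge_norm_minus_rest) auto
  then have "w x * (?a m - (\<Sum>j\<in>{..<J} - {m}. ?a j)) \<le> w x * cmod (Iop M (\<lambda>z. \<Sum>j<J. g j z) x)"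
    using weight_pos[OF weight_w x] by (intro mult_left_mono) (auto simp: less_imp_le)
  then have "w x * ?a m - (\<Sum>j\<in>{..<J} - {m}. w x * ?a j) \<le> w x * cmod (Iop M (\<lambda>z. \<Sum>j<J. g j z) x)"
    by (simp add: right_diff_distrib sum_distrib_left)
  moreover have "(\<Sum>j\<in>{..<J} - {m}. w x * ?a j) \<le> (\<Sum>j<J. \<epsilon> / 4 * (1/2) ^ j)"
    using off_peak \<open>0 < \<epsilon>\<close> by (intro order_trans[OF sum_mono sum_mono2]) auto
  moreover have "(\<Sum>j<J. \<epsilon> / 4 * (1/2::real) ^ j) \<le> \<epsilon> / 4 * 2"
    unfolding sum_distrib_left[symmetric] using sum_half_powers_le \<open>0 < \<epsilon>\<close>
    by (intro mult_left_mono) auto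
  ultimately show ?thesis using peak by linarith
qed

text \<open>The partial sums of \<open>\<Sum>j. g j\<close> are bounded in \<open>H\<^sup>\<infinity>\<^sub>v\<close>; by Montel a subsequence converges
  to some \<open>f\<close>, and the peak of \<open>Iop M (g m)\<close> at \<open>x m\<close> survives in \<open>Iop M f\<close>.\<close>
lemma Iop_sum_of_humps_not_in_H0:
  fixes g :: "nat \<Rightarrow> complex \<Rightarrow> complex" and x :: "nat \<Rightarrow> complex"
  assumes hol: "\<And>j. g j holomorphic_on ball 0 1" and bound: "\<And>j. wnorm_le v (g j) K"
    and humps: "\<And>z. z \<in> ball 0 1 \<Longrightarrow> \<exists>i. \<forall>j. j \<noteq> i \<longrightarrow> v z * cmod (g j z) \<le> 2 * (1/2) ^ j"
    and x: "\<And>m. x m \<in> ball 0 1" and x_lim: "(\<lambda>m. cmod (x m)) \<longlonglongrightarrow> 1"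
    and "0 < \<epsilon>" and peak: "\<And>m. \<epsilon> < w (x m) * cmod (Iop M (g m) (x m))"
    and off_peak: "\<And>m j. j \<noteq> m \<Longrightarrow> w (x m) * cmod (Iop M (g j) (x m)) \<le> \<epsilon> / 4 * (1/2) ^ j"
  shows "\<exists>f\<in>Hinf v. Iop M f \<notin> H0 w"
proof -
  have cont: "continuous_on (ball 0 1) (g j)" for j using hol by (rule holomorphic_on_imp_continuous_on)
  define S where "S J = (\<lambda>z. \<Sum>j<J. g j z)" for J
  have S_hol: "S J holomorphic_on ball 0 1" for J unfolding S_def by (intro holomorphic_intros hol)
  have S_bound: "wnorm_le v (S J) (K + 4)" for J
    unfolding S_def by (rule wnorm_le_sum_of_humps[OF weight_v bound humps])
  obtain f s where f: "f holomorphic_on ball 0 1" "wnorm_le v f (K + 4)" "strict_mono s"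
      "\<And>z. z \<in> ball 0 1 \<Longrightarrow> (\<lambda>n. S (s n) z) \<longlonglongrightarrow> f z"
    by (rule weighted_Montel[OF weight_v S_hol S_bound], rule that)
  have f_large: "\<epsilon> / 2 \<le> w (x m) * cmod (Iop M f (x m))" for m
  proof (rule LIMSEQ_le_const)
    have "(\<lambda>n. Iop M (S (s n)) (x m)) \<longlonglongrightarrow> Iop M f (x m)"
      using S_hol S_bound f(1,2,4) x
      by (intro Iop_tendsto holomorphic_on_imp_continuous_on) auto
    then show "(\<lambda>n. w (x m) * cmod (Iop M (S (s n)) (x m))) \<longlonglongrightarrow> w (x m) * cmod (Iop M f (x m))"
      by (intro tendsto_intros)
    show "\<exists>N. \<forall>n\<ge>N. \<epsilon> / 2 \<le> w (x m) * cmod (Iop M (S (s n)) (x m))"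
    proof (intro exI allI impI)
      fix n assume "Suc m \<le> n"
      then have "m < s n" using seq_suble[OF f(3), of n] by simp
      then show "\<epsilon> / 2 \<le> w (x m) * cmod (Iop M (S (s n)) (x m))"
        unfolding S_def using Iop_sum_keeps_peak[OF cont bound x \<open>0 < \<epsilon>\<close> _ peak off_peak]
        by (simp add: less_imp_le)
    qed
  qed
  have "Iop M f \<notin> H0 w"
  proof
    assume "Iop M f \<in> H0 w"
    moreover have "0 < \<epsilon> / 4" using \<open>0 < \<epsilon>\<close> by simp
    ultimately obtain \<rho> where "\<rho> < 1"
      and \<rho>: "\<forall>z\<in>ball 0 1. \<rho> < cmod z \<longrightarrow> w z * cmod (Iop M f z) \<le> \<epsilon> / 4"
      unfolding H0_def by blast
    have "\<forall>\<^sub>F m in sequentially. \<rho> < cmod (x m)"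
      using x_lim \<open>\<rho> < 1\<close> by (rule order_tendstoD)
    then obtain m where "\<rho> < cmod (x m)" using eventually_happens'[OF trivial_limit_sequentially] by blast
    then show False using \<rho> x f_large[of m] \<open>0 < \<epsilon>\<close> by force
  qed
  then show ?thesis using f(1,2) by (auto simp: Hinf_def)
qed

lemma Iop_peaks_tend_to_boundary:
  assumes cont: "\<And>k. continuous_on (ball 0 1) (e k)" and bound: "\<And>k. wnorm_le v (e k) K"
    and null: "\<And>t. t \<in> {0..<1} \<Longrightarrow> (\<lambda>k. e k (complex_of_real t)) \<longlonglongrightarrow> 0"
    and z: "\<And>k. z k \<in> ball 0 1" and "0 < \<epsilon>"
    and large: "\<And>k. \<epsilon> < w (z k) * cmod (Iop M (e k) (z k))"
  shows "(\<lambda>k. cmod (z k)) \<longlonglongrightarrow> 1"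
proof (rule order_tendstoI)
  show "\<forall>\<^sub>F k in sequentially. R < cmod (z k)" if "R < 1" for R
    using Iop_uniformly_small_on_cball[OF cont bound null that \<open>0 < \<epsilon>\<close>]
  proof (rule eventually_mono)
    fix k assume small: "\<forall>y\<in>cball 0 R. w y * cmod (Iop M (e k) y) \<le> \<epsilon>"
    show "R < cmod (z k)"
    proof (rule ccontr)
      assume "\<not> R < cmod (z k)"
      then have "z k \<in> cball 0 R" by simp
      then show False using small large[of k] by fastforce
    qed
  qed
  show "\<forall>\<^sub>F k in sequentially. cmod (z k) < R" if "1 < R" for R
  proof (rule always_eventually, rule allI)
    fix k show "cmod (z k) < R" using z[of k] that by simp
  qed
qed

lemma sparse_hump_subsequence:
  fixes e :: "nat \<Rightarrow> complex \<Rightarrow> complex" and z :: "nat \<Rightarrow> complex"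
  assumes e_H0: "\<And>k. e k \<in> H0 v" and Iop_e_H0: "\<And>k. Iop M (e k) \<in> H0 w"
    and bound: "\<And>k. wnorm_le v (e k) K"
    and null: "\<And>\<rho>. \<rho> < 1 \<Longrightarrow> uniform_limit (cball 0 \<rho>) e (\<lambda>_. 0) sequentially"
    and z: "\<And>k. z k \<in> ball 0 1" and "0 < \<epsilon>"
    and large: "\<And>k. \<epsilon> < w (z k) * cmod (Iop M (e k) (z k))"
  obtains r :: "nat \<Rightarrow> nat" and a :: "nat \<Rightarrow> real"
  where "strict_mono r" "(\<lambda>m. cmod (z (r m))) \<longlonglongrightarrow> 1"
    "mono a" "\<And>m. cmod (z (r m)) \<le> a m" "\<And>m. a m < cmod (z (r (Suc m)))"
    "\<And>j (y::complex). y \<in> ball 0 1 \<Longrightarrow> a j < cmod y \<Longrightarrow>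
       v y * cmod (e (r j) y) \<le> (1/2) ^ j \<and> w y * cmod (Iop M (e (r j)) y) \<le> \<epsilon> / 8 * (1/2) ^ j"
    "\<And>j (y::complex). cmod y \<le> a j \<Longrightarrow>
       v y * cmod (e (r (Suc j)) y) \<le> (1/2) ^ j \<and> w y * cmod (Iop M (e (r (Suc j))) y) \<le> \<epsilon> / 8 * (1/2) ^ j"
proof -
  have cont: "continuous_on (ball 0 1) (e k)" for k
    using e_H0[of k] by (auto simp: H0_def Hinf_def intro: holomorphic_on_imp_continuous_on)
  have pointwise_null: "(\<lambda>k. e k (complex_of_real t)) \<longlonglongrightarrow> 0" if "t \<in> {0..<1}" for t
    using tendsto_uniform_limitI[OF null[of t], of "complex_of_real t"] that by auto
  obtain \<rho>v where \<rho>v: "\<And>k. \<rho>v k < 1"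
    "\<And>k y. y \<in> ball 0 1 \<Longrightarrow> \<rho>v k < cmod y \<Longrightarrow> v y * cmod (e k y) \<le> (1/2) ^ k"
    by (rule H0_choose_radii[where \<delta> = "\<lambda>k. (1/2) ^ k", OF e_H0], simp, rule that)
  obtain \<rho>w where \<rho>w: "\<And>k. \<rho>w k < 1"
    "\<And>k y. y \<in> ball 0 1 \<Longrightarrow> \<rho>w k < cmod y \<Longrightarrow> w y * cmod (Iop M (e k) y) \<le> \<epsilon> / 8 * (1/2) ^ k"
    by (rule H0_choose_radii[where \<delta> = "\<lambda>k. \<epsilon> / 8 * (1/2) ^ k", OF Iop_e_H0],
        simp add: \<open>0 < \<epsilon>\<close>, rule that)
  have z_lim: "(\<lambda>k. cmod (z k)) \<longlonglongrightarrow> 1"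
    by (rule Iop_peaks_tend_to_boundary[OF cont bound pointwise_null z \<open>0 < \<epsilon>\<close> large])
  define c where "c k = max (max (\<rho>v k) (\<rho>w k)) (cmod (z k))" for k
  have c_lt_1: "c k < 1" for k using \<rho>v(1) \<rho>w(1) z by (simp add: c_def)
  define sparse where "sparse k k' \<longleftrightarrow> c k < cmod (z k') \<and> (\<forall>y\<in>cball 0 (c k).
      v y * cmod (e k' y) \<le> (1/2) ^ k \<and> w y * cmod (Iop M (e k') y) \<le> \<epsilon> / 8 * (1/2) ^ k)"
    for k k'
  have sparse_eventually: "\<forall>\<^sub>F k' in sequentially. sparse k k'" for k
  proof -
    have "\<forall>\<^sub>F k' in sequentially. \<forall>y\<in>cball 0 (c k). v y * cmod (e k' y) \<le> (1/2) ^ k"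
      by (rule eventually_weighted_le_of_uniform_limit_0[OF weight_v null[OF c_lt_1] c_lt_1]) simp
    moreover have "\<forall>\<^sub>F k' in sequentially. \<forall>y\<in>cball 0 (c k). w y * cmod (Iop M (e k') y) \<le> \<epsilon> / 8 * (1/2) ^ k"
      using \<open>0 < \<epsilon>\<close> by (intro Iop_uniformly_small_on_cball[OF cont bound pointwise_null c_lt_1]) simp_all
    moreover have "\<forall>\<^sub>F k' in sequentially. c k < cmod (z k')"
      using z_lim c_lt_1 by (rule order_tendstoD)
    ultimately show ?thesis unfolding sparse_def by eventually_elim blast
  qed
  obtain r where r: "strict_mono r" "\<And>j. sparse (r j) (r (Suc j))"
    by (rule eventually_chain_subseq[of sparse, OF sparse_eventually], rule that)
  have half: "(1/2::real) ^ r j \<le> (1/2) ^ j" for j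
    by (rule half_power_le_of_le[OF seq_suble[OF r(1)]])
  have weaken: "s \<le> (1/2) ^ r j \<Longrightarrow> s \<le> (1/2) ^ j"
    "s \<le> \<epsilon> / 8 * (1/2) ^ r j \<Longrightarrow> s \<le> \<epsilon> / 8 * (1/2) ^ j" for s j
    using half[of j] mult_left_mono[OF half[of j], of "\<epsilon> / 8"] \<open>0 < \<epsilon>\<close> by linarith+
  show ?thesis
  proof (rule that[of r "\<lambda>j. c (r j)"])
    show "cmod (z (r m)) \<le> c (r m)" for m by (simp add: c_def)
    show "c (r m) < cmod (z (r (Suc m)))" for m using r(2)[of m] by (simp add: sparse_def)
    then show "mono (\<lambda>j. c (r j))"
      using \<open>cmod (z (r _)) \<le> c (r _)\<close> by (auto simp: mono_iff_le_Suc intro: less_imp_le less_le_trans)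
    show "v y * cmod (e (r j) y) \<le> (1/2) ^ j \<and> w y * cmod (Iop M (e (r j)) y) \<le> \<epsilon> / 8 * (1/2) ^ j"
      if "y \<in> ball 0 1" "c (r j) < cmod y" for j y
    proof -
      have "\<rho>v (r j) < cmod y" "\<rho>w (r j) < cmod y" using that(2) by (auto simp: c_def)
      then show ?thesis using \<rho>v(2) \<rho>w(2) that(1) weaken by blast
    qed
    show "v y * cmod (e (r (Suc j)) y) \<le> (1/2) ^ j \<and> w y * cmod (Iop M (e (r (Suc j))) y) \<le> \<epsilon> / 8 * (1/2) ^ j"
      if "cmod y \<le> c (r j)" for j y
      using r(2)[of j] that weaken unfolding sparse_def by simp
    show "(\<lambda>m. cmod (z (r m))) \<longlonglongrightarrow> 1"
      using LIMSEQ_subseq_LIMSEQ[OF z_lim r(1)] by (simp add: o_def)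
  qed (rule r(1))
qed

lemma Iop_null_sequence_not_uniformly_large:
  fixes e :: "nat \<Rightarrow> complex \<Rightarrow> complex" and z :: "nat \<Rightarrow> complex"
  assumes Iop_into_H0: "\<forall>f\<in>Hinf v. Iop M f \<in> H0 w"
    and e_H0: "\<And>k. e k \<in> H0 v" and bound: "\<And>k. wnorm_le v (e k) K"
    and null: "\<And>\<rho>. \<rho> < 1 \<Longrightarrow> uniform_limit (cball 0 \<rho>) e (\<lambda>_. 0) sequentially"
    and z: "\<And>k. z k \<in> ball 0 1" and "0 < \<epsilon>"
    and large: "\<And>k. \<epsilon> < w (z k) * cmod (Iop M (e k) (z k))"
  shows False
proof -
  have Iop_e_H0: "Iop M (e k) \<in> H0 w" for k using Iop_into_H0 e_H0 H0_subset_Hinf by blast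
  obtain r a where "strict_mono r" and x_lim: "(\<lambda>m. cmod (z (r m))) \<longlonglongrightarrow> 1"
    and "mono a" and z_le_a: "\<And>m. cmod (z (r m)) \<le> a m" and a_lt_z: "\<And>m. a m < cmod (z (r (Suc m)))"
    and outside: "\<And>j y. y \<in> ball 0 1 \<Longrightarrow> a j < cmod y \<Longrightarrow>
       v y * cmod (e (r j) y) \<le> (1/2) ^ j \<and> w y * cmod (Iop M (e (r j)) y) \<le> \<epsilon> / 8 * (1/2) ^ j"
    and inside: "\<And>j y. cmod y \<le> a j \<Longrightarrow>
       v y * cmod (e (r (Suc j)) y) \<le> (1/2) ^ j \<and> w y * cmod (Iop M (e (r (Suc j))) y) \<le> \<epsilon> / 8 * (1/2) ^ j"
    using sparse_hump_subsequence[OF e_H0 Iop_e_H0 bound null z \<open>0 < \<epsilon>\<close> large] by blast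
  define x where "x m = z (r m)" for m
  have x_ball: "x m \<in> ball 0 1" for m unfolding x_def by (rule z)
  have humps: "\<exists>i. \<forall>j. j \<noteq> i \<longrightarrow> v y * cmod (e (r j) y) \<le> 2 * (1/2) ^ j"
    if y: "y \<in> ball 0 1" for y
  proof (rule ex_index_off_which_le[OF \<open>mono a\<close>])
    show "v y * cmod (e (r j) y) \<le> 2 * (1/2) ^ j" if "a j < cmod y" for j
      using conjunct1[OF outside[OF y that]] zero_le_power[of "1/2::real" j] by linarith
    show "v y * cmod (e (r (Suc j)) y) \<le> 2 * (1/2) ^ Suc j" if "cmod y \<le> a j" for j
      using inside[OF that] by simp
  qed
  have off_peak: "w (x m) * cmod (Iop M (e (r j)) (x m)) \<le> \<epsilon> / 4 * (1/2) ^ j" if "j \<noteq> m" for m j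
  proof (rule le_off_threshold_index[where u = "\<lambda>j. w (x m) * cmod (Iop M (e (r j)) (x m))"
        and c = "\<lambda>j. \<epsilon> / 4 * (1/2) ^ j", OF \<open>mono a\<close> _ _ _ _ that])
    show "w (x m) * cmod (Iop M (e (r i)) (x m)) \<le> \<epsilon> / 4 * (1/2) ^ i" if "a i < cmod (x m)" for i
    proof -
      have "w (x m) * cmod (Iop M (e (r i)) (x m)) \<le> \<epsilon> / 8 * (1/2) ^ i"
        using outside x_ball that by blast
      moreover have "0 \<le> \<epsilon> / 8 * (1/2::real) ^ i" using \<open>0 < \<epsilon>\<close> by simp
      ultimately show ?thesis by linarith
    qed
    show "w (x m) * cmod (Iop M (e (r (Suc i))) (x m)) \<le> \<epsilon> / 4 * (1/2) ^ Suc i"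
      if "cmod (x m) \<le> a i" for i
      using inside[OF that] by simp
    show "a i < cmod (x m)" if "i < m" for i
    proof -
      have "a i \<le> a (m - 1)" using that by (intro monoD[OF \<open>mono a\<close>]) simp
      also have "\<dots> < cmod (x m)" using a_lt_z[of "m - 1"] that by (simp add: x_def)
      finally show ?thesis .
    qed
    show "cmod (x m) \<le> a m" by (simp add: x_def z_le_a)
  qed
  have "\<exists>f\<in>Hinf v. Iop M f \<notin> H0 w"
  proof (rule Iop_sum_of_humps_not_in_H0[where g = "\<lambda>j. e (r j)" and x = x and K = K and \<epsilon> = \<epsilon>])
    show "e (r j) holomorphic_on ball 0 1" for j using e_H0[of "r j"] by (simp add: H0_def Hinf_def)
    show "(\<lambda>m. cmod (x m)) \<longlonglongrightarrow> 1" using x_lim by (simp add: x_def)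
    show "\<epsilon> < w (x m) * cmod (Iop M (e (r m)) (x m))" for m by (simp add: x_def large)
  qed (use bound x_ball humps off_peak \<open>0 < \<epsilon>\<close> in auto)
  with Iop_into_H0 show False by blast
qed

lemma Iop_wnorm_tendsto_0:
  fixes d :: "nat \<Rightarrow> complex \<Rightarrow> complex"
  assumes Iop_into_H0: "\<forall>f\<in>Hinf v. Iop M f \<in> H0 w"
    and hol: "\<And>k. d k holomorphic_on ball 0 1" and bound: "\<And>k. wnorm_le v (d k) K"
    and null: "\<And>\<rho>. \<rho> < 1 \<Longrightarrow> uniform_limit (cball 0 \<rho>) d (\<lambda>_. 0) sequentially"
  shows "wnorm_tendsto w (\<lambda>k. Iop M (d k)) (\<lambda>_. 0)"
proof (rule ccontr)
  assume "\<not> ?thesis"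
  then obtain \<epsilon> where "0 < \<epsilon>" and "\<forall>N. \<exists>k\<ge>N. \<exists>y\<in>ball 0 1. \<epsilon> < w y * cmod (Iop M (d k) y)"
    by (auto simp: not_le)
  then obtain n z where n: "\<And>N. N \<le> n N" and z: "\<And>N. z N \<in> ball 0 1"
    and large: "\<And>N. \<epsilon> < w (z N) * cmod (Iop M (d (n N)) (z N))"
    by metis
  obtain \<sigma> :: "nat \<Rightarrow> complex" where \<sigma>: "\<And>i. cmod (\<sigma> i) < 1" "\<sigma> \<longlonglongrightarrow> 1"
    by (rule exists_dilation_factors, rule that)
  txt \<open>A slight dilation keeps the value at \<open>z N\<close> large and moves the function into \<open>H0 v\<close>,
    which the gliding hump needs to control the tails of its series.\<close>
  have "\<exists>i. \<epsilon> < w (z N) * cmod (Iop M (\<lambda>y. d (n N) (\<sigma> i * y)) (z N))" for N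
  proof -
    have "(\<lambda>i. Iop M (\<lambda>y. d (n N) (\<sigma> i * y)) (z N)) \<longlonglongrightarrow> Iop M (d (n N)) (z N)"
      using hol bound \<sigma> z
      by (intro Iop_dilation_tendsto holomorphic_on_imp_continuous_on) (auto intro: less_imp_le)
    then have "(\<lambda>i. w (z N) * cmod (Iop M (\<lambda>y. d (n N) (\<sigma> i * y)) (z N)))
        \<longlonglongrightarrow> w (z N) * cmod (Iop M (d (n N)) (z N))"
      by (intro tendsto_intros)
    then have "\<forall>\<^sub>F i in sequentially. \<epsilon> < w (z N) * cmod (Iop M (\<lambda>y. d (n N) (\<sigma> i * y)) (z N))"
      using large[of N] by (rule order_tendstoD(1))
    then show ?thesis using eventually_happens'[OF trivial_limit_sequentially] by blast
  qed
  then obtain i where i: "\<And>N. \<epsilon> < w (z N) * cmod (Iop M (\<lambda>y. d (n N) (\<sigma> (i N) * y)) (z N))"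
    by metis
  define e where "e N = (\<lambda>y. d (n N) (\<sigma> (i N) * y))" for N
  show False
  proof (rule Iop_null_sequence_not_uniformly_large[OF Iop_into_H0 _ _ _ z \<open>0 < \<epsilon>\<close>])
    show "e N \<in> H0 v" for N unfolding e_def by (rule dilation_in_H0[OF weight_v hol \<sigma>(1)])
    show "wnorm_le v (e N) K" for N
      unfolding e_def using \<sigma>(1) by (intro wnorm_le_dilation[OF weight_v bound]) (rule less_imp_le)
    show "\<epsilon> < w (z N) * cmod (Iop M (e N) (z N))" for N unfolding e_def by (rule i)
    show "uniform_limit (cball 0 \<rho>) e (\<lambda>_. 0) sequentially" if "\<rho> < 1" for \<rho>
      unfolding e_def[abs_def] using \<sigma>(1)
      by (intro uniform_limit_0_dilations[OF null[OF that] n]) (rule less_imp_le)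
  qed
qed

lemma Iop_compact_subsequence:
  fixes F :: "nat \<Rightarrow> complex \<Rightarrow> complex"
  assumes Iop_into_H0: "\<forall>f\<in>Hinf v. Iop M f \<in> H0 w"
    and hol: "\<And>n. F n holomorphic_on ball 0 1" and bound: "\<And>n. wnorm_le v (F n) B"
  obtains r f where "strict_mono r" "f \<in> Hinf v" "wnorm_tendsto w (\<lambda>n. Iop M (F (r n))) (Iop M f)"
proof -
  obtain f r where f: "f holomorphic_on ball 0 1" "wnorm_le v f B" "strict_mono r"
      "\<And>\<rho>. \<rho> < 1 \<Longrightarrow> uniform_limit (cball 0 \<rho>) (F \<circ> r) f sequentially"
    by (rule weighted_Montel[OF weight_v hol bound], rule that)
  define d where "d n = (\<lambda>z. F (r n) z - f z)" for n
  have "wnorm_tendsto w (\<lambda>n. Iop M (d n)) (\<lambda>_. 0)"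
  proof (rule Iop_wnorm_tendsto_0[OF Iop_into_H0])
    show "d n holomorphic_on ball 0 1" for n unfolding d_def by (intro holomorphic_intros hol f(1))
    show "wnorm_le v (d n) (2 * B)" for n
    proof
      fix z :: complex assume z: "z \<in> ball 0 1"
      have "v z * cmod (d n z) \<le> v z * cmod (F (r n) z) + v z * cmod (f z)"
        unfolding d_def distrib_left[symmetric] using weight_pos[OF weight_v z]
        by (intro mult_left_mono norm_triangle_ineq4) auto
      moreover have "v z * cmod (F (r n) z) \<le> B" "v z * cmod (f z) \<le> B" using bound f(2) z by auto
      ultimately show "v z * cmod (d n z) \<le> 2 * B" by linarith
    qed
    show "uniform_limit (cball 0 \<rho>) d (\<lambda>_. 0) sequentially" if "\<rho> < 1" for \<rho>
      using uniform_limit_minus[OF f(4)[OF that] uniform_limit_const[where c = f]]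
      by (simp add: d_def[abs_def] o_def)
  qed
  moreover have "Iop M (d n) z = Iop M (F (r n)) z - Iop M f z" if "z \<in> ball 0 1" for n z
    unfolding d_def using hol f(1,2) bound that
    by (intro Iop_diff holomorphic_on_imp_continuous_on) auto
  ultimately have "wnorm_tendsto w (\<lambda>n. Iop M (F (r n))) (Iop M f)" by simp
  moreover have "f \<in> Hinf v" using f(1,2) by (auto simp: Hinf_def)
  ultimately show ?thesis using that f(3) by blast
qed

lemma Iop_Hinf_into_H0_if_compact:
  assumes compact: "compact_op (Iop M) (H0 v) (H0 w) v w" and "f \<in> Hinf v"
  shows "Iop M f \<in> H0 w"
proof -
  obtain B where hol: "f holomorphic_on ball 0 1" and bound: "wnorm_le v f B"
    using \<open>f \<in> Hinf v\<close> by (auto simp: Hinf_def)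
  obtain \<sigma> :: "nat \<Rightarrow> complex" where \<sigma>: "\<And>n. cmod (\<sigma> n) < 1" "\<sigma> \<longlonglongrightarrow> 1"
    by (rule exists_dilation_factors, rule that)
  define F where "F n = (\<lambda>z. f (\<sigma> n * z))" for n
  have "(\<forall>n. F n \<in> H0 v) \<and> (\<forall>n. wnorm_le v (F n) B)"
    unfolding F_def using dilation_in_H0[OF weight_v hol \<sigma>(1)]
      wnorm_le_dilation[OF weight_v bound] \<sigma>(1) less_imp_le by blast
  then obtain r g where r: "strict_mono r" and "g \<in> H0 w"
    and lim: "wnorm_tendsto w (\<lambda>n. Iop M (F (r n))) g"
    using compact[unfolded compact_op_def, THEN conjunct2, rule_format, of F B] by blast
  have "Iop M f z = g z" if z: "z \<in> ball 0 1" for z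
  proof (rule LIMSEQ_unique)
    have "(\<lambda>n. \<sigma> (r n)) \<longlonglongrightarrow> 1" using LIMSEQ_subseq_LIMSEQ[OF \<sigma>(2) r] by (simp add: o_def)
    then show "(\<lambda>n. Iop M (F (r n)) z) \<longlonglongrightarrow> Iop M f z"
      unfolding F_def using \<sigma>(1)
      by (intro Iop_dilation_tendsto[OF holomorphic_on_imp_continuous_on[OF hol] bound _ _ z])
        (auto intro: less_imp_le)
    show "(\<lambda>n. Iop M (F (r n)) z) \<longlonglongrightarrow> g z" by (rule wnorm_tendsto_imp_tendsto[OF weight_w lim z])
  qed
  then show ?thesis using H0_cong_ball[OF \<open>g \<in> H0 w\<close>] by blast
qed

lemma compact_op_Iop_if_Hinf_into_H0:
  assumes into: "\<forall>f\<in>Hinf v. Iop M f \<in> H0 w"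
    and "X \<subseteq> Hinf v" "H0 w \<subseteq> Y" "\<forall>f\<in>X. Iop M f \<in> Y"
  shows "compact_op (Iop M) X Y v w"
  unfolding compact_op_def
proof (intro conjI allI impI)
  fix F :: "nat \<Rightarrow> complex \<Rightarrow> complex" and B :: real
  assume F: "(\<forall>n. F n \<in> X) \<and> (\<forall>n. wnorm_le v (F n) B)"
  then have "F n holomorphic_on ball 0 1" for n using \<open>X \<subseteq> Hinf v\<close> by (auto simp: Hinf_def)
  then obtain r f where "strict_mono r" "f \<in> Hinf v" "wnorm_tendsto w (\<lambda>n. Iop M (F (r n))) (Iop M f)"
    using Iop_compact_subsequence[OF into] F by metis
  then show "\<exists>r g. strict_mono r \<and> g \<in> Y \<and> wnorm_tendsto w (\<lambda>n. Iop M (F (r n))) g"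
    using \<open>H0 w \<subseteq> Y\<close> into by blast
qed fact

end

theorem proposition11:
  fixes M :: "real measure" and v w :: "complex \<Rightarrow> real"
  assumes "finite_measure M"
    and "sets M = sets (restrict_space borel {0..<1::real})"
    and "weight v" and "weight w"
    and "integrable M (\<lambda>t. 1 / v (complex_of_real t))"
    and "\<forall>f\<in>H0 v. Iop M f \<in> H0 w"
    and "bounded_op (Iop M) (H0 v) v w"
  shows "(compact_op (Iop M) (H0 v) (H0 w) v w \<and> compact_op (Iop M) (Hinf v) (Hinf w) v w)
         \<longleftrightarrow> (\<forall>f\<in>Hinf v. Iop M f \<in> H0 w)"
proof -
  interpret Iop_weighted_pair M v w using assms(2-5) by unfold_locales
  show ?thesis
  proof
    assume "compact_op (Iop M) (H0 v) (H0 w) v w \<and> compact_op (Iop M) (Hinf v) (Hinf w) v w"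
    then show "\<forall>f\<in>Hinf v. Iop M f \<in> H0 w" using Iop_Hinf_into_H0_if_compact by blast
  next
    assume into: "\<forall>f\<in>Hinf v. Iop M f \<in> H0 w"
    then have "\<forall>f\<in>Hinf v. Iop M f \<in> Hinf w" using H0_subset_Hinf by blast
    then show "compact_op (Iop M) (H0 v) (H0 w) v w \<and> compact_op (Iop M) (Hinf v) (Hinf w) v w"
      using compact_op_Iop_if_Hinf_into_H0[OF into H0_subset_Hinf order_refl assms(6)]
        compact_op_Iop_if_Hinf_into_H0[OF into order_refl H0_subset_Hinf] by blast
  qed
qed

end
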